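(* Consider the Best-or-Worst secretary problem with $n\ge1$ candidates. Then there exists an integer $r(n)$ with $0\le r(n)\le n$ such that the following strategy is optimal (maximizes the probability of success among all strategies): reject the first $r(n)$ interviewed candidates; after that, accept the first candidate which is either better than all the preceding candidates or worse than all the preceding candidates.
   Context: Setting (secretary-type problem): $n$ candidates have distinct qualities (a strict total order) and are interviewed one at a time in uniformly random order (all $n!$ orders equally likely). After the $k$-th interview, the interviewer knows only the relative ranks of the first $k$ candidates among themselves and must immediately and irrevocably either accept the $k$-th candidate (stopping the process) or reject it; rejected candidates cannot be recalled. A strategy is a rule that makes this decision at each step using only the relative ranks observed so far (it may end up accepting nobody). In the Best-or-Worst problem, the strategy succeeds if the accepted candidate is either the overall best or the overall worst of all $n$ candidates (the two outcomes are equally valued); a strategy is optimal if it maximizes the probability of success. *)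

theory Defs
  imports Complex_Main "HOL-Combinatorics.Permutations"
begin

text \<open>An arrival order is a permutation sigma of {..<n}: the candidate interviewed
  at (0-based) position i has quality sigma i; larger means better, so
  n - 1 is the overall best and 0 the overall worst.\<close>

definition rel_obs :: "(nat \<Rightarrow> nat) \<Rightarrow> nat \<Rightarrow> nat \<Rightarrow> nat \<Rightarrow> bool" where
  "rel_obs \<sigma> k = (\<lambda>i j. i < k \<and> j < k \<and> \<sigma> i < \<sigma> j)"

text \<open>A strategy: at step k (1-based), given the observed relative order of the
  first k candidates, decide whether to accept the k-th candidate.\<close>
type_synonym strategy = "nat \<Rightarrow> (nat \<Rightarrow> nat \<Rightarrow> bool) \<Rightarrow> bool"

definition bow_success :: "nat \<Rightarrow> strategy \<Rightarrow> (nat \<Rightarrow> nat) \<Rightarrow> bool" where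
  "bow_success n S \<sigma> =
     (\<exists>k\<in>{1..n}. S k (rel_obs \<sigma> k) \<and> (\<forall>j\<in>{1..<k}. \<not> S j (rel_obs \<sigma> j)) \<and>
        (\<sigma> (k - 1) = 0 \<or> \<sigma> (k - 1) = n - 1))"

definition success_prob :: "nat \<Rightarrow> strategy \<Rightarrow> real" where
  "success_prob n S =
     real (card {\<sigma>. \<sigma> permutes {..<n} \<and> bow_success n S \<sigma>}) /
     real (card {\<sigma>. \<sigma> permutes {..<n}})"

definition threshold_strategy :: "nat \<Rightarrow> strategy" where
  "threshold_strategy r k obs =
     (r < k \<and> ((\<forall>i<k - 1. obs i (k - 1)) \<or> (\<forall>i<k - 1. obs (k - 1) i)))"

end

theory Submission
  imports Defs
begin

text \<open>Encode an arrival order by its rank code (Lehmer code), the list of relative ranks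
  of the candidates among those seen so far. The codes of the n! orders are exactly the
  lists whose i-th entry is at most i, so the entries are independent and uniform, and what
  a strategy has observed after k interviews is the length-k prefix of the code. Candidate m
  is overall best iff its relative rank is m and no later candidate is a relative best; by
  independence of the later entries, a relative best at position m is the overall best with
  probability (m + 1)/n, and similarly for the worst. Backward induction over the stages
  then shows that once m candidates have been passed over, no strategy succeeds with
  probability more than 2 k (n - k)/(n (n - 1)) with k = max m (n div 2), and that the
  threshold strategy with r = n div 2 attains this bound.\<close>

section \<open>Rank codes\<close>

text \<open>Codes of the candidates at (0-based) positions m, ..., n - 1: entry i is the relative
  rank of candidate m + i among the first m + i + 1, counted from the worst.\<close>
definition rank_codes :: "nat \<Rightarrow> nat \<Rightarrow> nat list set" where
  "rank_codes n m = {xs. length xs = n - m \<and> (\<forall>i<length xs. xs ! i \<le> m + i)}"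

lemma finite_rank_codes: "finite (rank_codes n m)"
proof -
  have "rank_codes n m \<subseteq> {xs. set xs \<subseteq> {..n} \<and> length xs = n - m}"
    by (auto simp: rank_codes_def in_set_conv_nth)
      (metis add.commute le_trans less_diff_conv less_or_eq_imp_le)
  then show ?thesis
    using finite_lists_length_eq[of "{..n}" "n - m"] finite_subset by auto
qed

lemma rank_codes_self: "rank_codes n n = {[]}"
  by (auto simp: rank_codes_def)

lemma rank_codes_Cons_iff:
  assumes "m < n"
  shows "x # ys \<in> rank_codes n m \<longleftrightarrow> x \<le> m \<and> ys \<in> rank_codes n (Suc m)"
  using assms by (auto simp: rank_codes_def nth_Cons less_Suc_eq_0_disj split: nat.split)

lemma card_rank_codes_filter_Cons:
  assumes "m < n"
  shows "card {xs \<in> rank_codes n m. P xs} = (\<Sum>x\<le>m. card {ys \<in> rank_codes n (Suc m). P (x # ys)})"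
proof -
  have "{xs \<in> rank_codes n m. P xs} = (\<Union>x\<le>m. (#) x ` {ys \<in> rank_codes n (Suc m). P (x # ys)})"
  proof (intro set_eqI iffI)
    fix xs assume xs: "xs \<in> {xs \<in> rank_codes n m. P xs}"
    with assms obtain x ys where "xs = x # ys"
      by (cases xs) (auto simp: rank_codes_def)
    with xs show "xs \<in> (\<Union>x\<le>m. (#) x ` {ys \<in> rank_codes n (Suc m). P (x # ys)})"
      using rank_codes_Cons_iff[OF assms] by auto
  qed (use rank_codes_Cons_iff[OF assms] in auto)
  also have "card \<dots> = (\<Sum>x\<le>m. card ((#) x ` {ys \<in> rank_codes n (Suc m). P (x # ys)}))"
    by (rule card_UN_disjoint) (auto intro: finite_subset[OF _ finite_rank_codes])
  also have "\<dots> = (\<Sum>x\<le>m. card {ys \<in> rank_codes n (Suc m). P (x # ys)})"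
    by (intro sum.cong refl card_image) auto
  finally show ?thesis .
qed

lemma card_rank_codes_pointwise:
  assumes "k \<le> n"
  shows "card {ys \<in> rank_codes n k. \<forall>j<length ys. P (k + j) (ys ! j)} =
    (\<Prod>j\<in>{k..<n}. card {v. v \<le> j \<and> P j v})"
  using assms
proof (induction "n - k" arbitrary: k)
  case 0
  then have "{ys \<in> rank_codes n k. \<forall>j<length ys. P (k + j) (ys ! j)} = {[]}"
    by (auto simp: rank_codes_self)
  with 0 show ?case by simp
next
  case (Suc d)
  then have k: "k < n" by simp
  have Cons: "(\<forall>j<length (x # ys). P (k + j) ((x # ys) ! j)) \<longleftrightarrow>
      P k x \<and> (\<forall>j<length ys. P (Suc k + j) (ys ! j))" for x ys
    by (auto simp: less_Suc_eq_0_disj)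
  have "card {ys \<in> rank_codes n k. \<forall>j<length ys. P (k + j) (ys ! j)} =
      (\<Sum>x\<le>k. if P k x then card {ys \<in> rank_codes n (Suc k). \<forall>j<length ys. P (Suc k + j) (ys ! j)} else 0)"
    unfolding card_rank_codes_filter_Cons[OF k] Cons by (intro sum.cong) auto
  also have "\<dots> = card {v. v \<le> k \<and> P k v} * (\<Prod>j\<in>{Suc k..<n}. card {v. v \<le> j \<and> P j v})"
    using Suc.hyps(1)[of "Suc k"] Suc.hyps(2) k by (simp add: sum.If_cases Int_def atMost_def)
  also have "\<dots> = (\<Prod>j\<in>{k..<n}. card {v. v \<le> j \<and> P j v})"
    using k by (simp add: prod.atLeast_Suc_lessThan)
  finally show ?case .
qed

lemma card_rank_codes: "k \<le> n \<Longrightarrow> card (rank_codes n k) = (\<Prod>j\<in>{k..<n}. Suc j)"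
  using card_rank_codes_pointwise[of k n "\<lambda>_ _. True"] by simp

lemma card_rank_codes_Suc:
  "m < n \<Longrightarrow> card (rank_codes n m) = Suc m * card (rank_codes n (Suc m))"
  by (simp add: card_rank_codes prod.atLeast_Suc_lessThan)

lemma card_rank_codes_pos: "m \<le> n \<Longrightarrow> 0 < card (rank_codes n m)"
  by (simp add: card_rank_codes)

lemma prod_atLeastLessThan_times_upper:
  "k \<le> n \<Longrightarrow> (\<Prod>j\<in>{k..<n}. j) * n = k * (\<Prod>j\<in>{k..<n}. Suc j)"
proof (induction n)
  case (Suc n)
  then show ?case
    by (cases "k = Suc n") (auto simp: prod.atLeastLessThan_Suc algebra_simps)
qed simp

lemma card_rank_codes_avoiding:
  assumes "k \<le> n" "\<And>j. j < n \<Longrightarrow> a j \<le> j"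
  shows "card {ys \<in> rank_codes n k. \<forall>j<length ys. ys ! j \<noteq> a (k + j)} * n = k * card (rank_codes n k)"
proof -
  have "card {v. v \<le> j \<and> v \<noteq> a j} = j" if "j \<in> {k..<n}" for j
  proof -
    have "{v. v \<le> j \<and> v \<noteq> a j} = {..j} - {a j}" by auto
    then show ?thesis using assms(2) that by simp
  qed
  then have "card {ys \<in> rank_codes n k. \<forall>j<length ys. ys ! j \<noteq> a (k + j)} = (\<Prod>j\<in>{k..<n}. j)"
    using card_rank_codes_pointwise[of k n "\<lambda>j v. v \<noteq> a j", OF assms(1)] by simp
  then show ?thesis
    using prod_atLeastLessThan_times_upper[OF assms(1)] card_rank_codes[OF assms(1)] by simp
qed

text \<open>Candidate m has relative rank x and the later candidates have codes ys: it is overall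
  best if it is a relative best and no later one is, overall worst likewise.\<close>
definition bow_win :: "nat \<Rightarrow> nat \<Rightarrow> nat list \<Rightarrow> bool" where
  "bow_win m x ys \<longleftrightarrow>
     (x = m \<and> (\<forall>j<length ys. ys ! j \<noteq> Suc m + j)) \<or> (x = 0 \<and> (\<forall>j<length ys. ys ! j \<noteq> 0))"

text \<open>D decides on the code prefix seen so far; after m candidates have been passed over,
  the rule is called with that prefix already fixed.\<close>
fun code_success :: "nat \<Rightarrow> (nat list \<Rightarrow> bool) \<Rightarrow> nat list \<Rightarrow> bool" where
  "code_success m D [] = False"
| "code_success m D (x # xs) =
     (if D [x] then bow_win m x xs else code_success (Suc m) (\<lambda>ys. D (x # ys)) xs)"

lemma bex_atLeastAtMost_1_Suc:
  "(\<exists>k\<in>{1..Suc l}. P k) \<longleftrightarrow> P 1 \<or> (\<exists>k\<in>{1..l}. P (Suc k))"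
proof -
  have "{1..Suc l} = insert 1 (Suc ` {1..l})"
    by auto
  then show ?thesis by (simp del: image_Suc_atLeastAtMost)
qed

lemma code_success_iff:
  "code_success m D xs \<longleftrightarrow>
     (\<exists>k\<in>{1..length xs}. D (take k xs) \<and> (\<forall>j\<in>{1..<k}. \<not> D (take j xs)) \<and>
        bow_win (m + k - 1) (xs ! (k - 1)) (drop k xs))"
proof (induction xs arbitrary: m D)
  case (Cons x xs)
  have earlier: "(\<forall>j\<in>{1..<Suc k}. \<not> D (take j (x # xs))) \<longleftrightarrow>
      \<not> D [x] \<and> (\<forall>j\<in>{1..<k}. \<not> D (x # take j xs))" if "1 \<le> k" for k
  proof -
    from that have "{1..<Suc k} = insert 1 (Suc ` {1..<k})"
      by auto
    then show ?thesis by (simp del: image_Suc_atLeastLessThan)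
  qed
  show ?case
    unfolding bex_atLeastAtMost_1_Suc length_Cons
    using Cons.IH[of "Suc m" "\<lambda>ys. D (x # ys)"] earlier by (auto intro!: bex_cong)
qed simp

lemma code_success_cong:
  assumes "\<And>k. 1 \<le> k \<Longrightarrow> k \<le> length xs \<Longrightarrow> D (take k xs) = D' (take k xs)"
  shows "code_success m D xs = code_success m D' xs"
  unfolding code_success_iff using assms by (intro bex_cong) auto

lemma card_code_success_Cons:
  assumes "m < n"
  shows "card {xs \<in> rank_codes n m. code_success m D xs} =
    (\<Sum>x\<le>m. if D [x] then card {ys \<in> rank_codes n (Suc m). bow_win m x ys}
             else card {ys \<in> rank_codes n (Suc m). code_success (Suc m) (\<lambda>ys. D (x # ys)) ys})"
  unfolding card_rank_codes_filter_Cons[OF assms] by (rule sum.cong) auto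

lemma card_bow_win:
  assumes "2 \<le> n" "m < n"
  shows "real (card {ys \<in> rank_codes n (Suc m). bow_win m x ys}) =
    (of_bool (x = m) + of_bool (x = 0)) * (real m + 1) / real n * real (card (rank_codes n (Suc m)))"
proof -
  let ?best = "{ys \<in> rank_codes n (Suc m). \<forall>j<length ys. ys ! j \<noteq> Suc m + j}"
  let ?worst = "{ys \<in> rank_codes n (Suc m). \<forall>j<length ys. ys ! j \<noteq> 0}"
  have best: "card ?best * n = Suc m * card (rank_codes n (Suc m))"
    using card_rank_codes_avoiding[of "Suc m" n id] assms by simp
  have worst: "card ?worst * n = Suc m * card (rank_codes n (Suc m))"
    using card_rank_codes_avoiding[of "Suc m" n "\<lambda>_. 0"] assms by simp
  have set_eq: "{ys \<in> rank_codes n (Suc m). bow_win m x ys} =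
      (if x = m then ?best else {}) \<union> (if x = 0 then ?worst else {})"
    by (auto simp: bow_win_def)
  have nat_eq: "card {ys \<in> rank_codes n (Suc m). bow_win m x ys} * n =
      (of_bool (x = m) + of_bool (x = 0)) * Suc m * card (rank_codes n (Suc m))"
  proof (cases "x = m \<and> x = 0")
    case True
    have "?best \<inter> ?worst = {}"
    proof (intro equals0I)
      fix ys assume ys: "ys \<in> ?best \<inter> ?worst"
      then have "0 < length ys" "ys ! 0 \<le> 1"
        using assms True by (auto simp: rank_codes_def)
      then show False using ys True by force
    qed
    then have "card (?best \<union> ?worst) = card ?best + card ?worst"
      by (intro card_Un_disjoint) (auto intro: finite_subset[OF _ finite_rank_codes])
    then show ?thesis
      using set_eq True best worst by (simp add: algebra_simps)
  next
    case False
    then show ?thesis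
      using set_eq best worst by auto
  qed
  have "real (card {ys \<in> rank_codes n (Suc m). bow_win m x ys}) * real n =
      (of_bool (x = m) + of_bool (x = 0)) * (real m + 1) * real (card (rank_codes n (Suc m)))"
    using arg_cong[OF nat_eq, of real]
    by (simp only: of_nat_mult of_nat_add of_nat_of_bool of_nat_Suc add.commute)
  with assms show ?thesis by (simp add: field_simps)
qed

section \<open>Optimal values\<close>

text \<open>For r \<ge> 1 this is the success probability of the threshold strategy with threshold r.\<close>
definition threshold_value :: "nat \<Rightarrow> nat \<Rightarrow> real" where
  "threshold_value n r = 2 * real r * (real n - real r) / (real n * (real n - 1))"

text \<open>The optimal success probability once the first m candidates have been passed over.\<close>
definition optimal_value :: "nat \<Rightarrow> nat \<Rightarrow> real" where
  "optimal_value n m = threshold_value n (max m (n div 2))"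

lemma div_2_bounds:
  assumes "2 \<le> n"
  shows "2 * real (n div 2) \<le> real n" "real n \<le> 2 * real (n div 2) + 1" "1 \<le> n div 2" "n div 2 < n"
  using assms by linarith+

lemma threshold_value_nonneg: "2 \<le> n \<Longrightarrow> r \<le> n \<Longrightarrow> 0 \<le> threshold_value n r"
  unfolding threshold_value_def by (intro divide_nonneg_pos mult_nonneg_nonneg) auto

lemma optimal_value_nonneg: "2 \<le> n \<Longrightarrow> m \<le> n \<Longrightarrow> 0 \<le> optimal_value n m"
  unfolding optimal_value_def using div_2_bounds[of n] by (intro threshold_value_nonneg) auto

lemma threshold_value_Suc:
  assumes "2 \<le> n"
  shows "(real m - 1) * threshold_value n (Suc m) + 2 * (real m + 1) / real n =
    (real m + 1) * threshold_value n m"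
  using assms unfolding threshold_value_def by (simp add: field_simps)

lemma divide_eq_over_n_pred_n:
  assumes "2 \<le> n"
  shows "a / real n = a * (real n - 1) / (real n * (real n - 1))"
  using assms by (simp add: field_simps)

lemma threshold_value_Suc_le:
  assumes "2 \<le> n" "n div 2 \<le> m"
  shows "threshold_value n (Suc m) \<le> (real m + 1) / real n"
proof -
  have "2 * (real n - (real m + 1)) \<le> real n - 1"
    using div_2_bounds(2)[OF assms(1)] of_nat_mono[OF assms(2), where 'a = real] by argo
  then have "(real m + 1) * (2 * (real n - (real m + 1))) \<le> (real m + 1) * (real n - 1)"
    by (rule mult_left_mono) simp
  then have "(real m + 1) * (2 * (real n - (real m + 1))) / (real n * (real n - 1))
      \<le> (real m + 1) * (real n - 1) / (real n * (real n - 1))"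
    using assms(1) by (intro divide_right_mono) auto
  then show ?thesis
    unfolding threshold_value_def divide_eq_over_n_pred_n[OF assms(1)] by (simp add: algebra_simps)
qed

lemma le_threshold_value_half:
  assumes "2 \<le> n" "Suc m \<le> n div 2"
  shows "(real m + 1) / real n \<le> threshold_value n (n div 2)"
proof -
  note half = div_2_bounds[OF assms(1)]
  have "(real m + 1) * (real n - 1) \<le> real (n div 2) * (real n - 1)"
    using assms by (intro mult_right_mono) auto
  also have "\<dots> \<le> real (n div 2) * (2 * (real n - real (n div 2)))"
    using half by (intro mult_left_mono) auto
  finally have "(real m + 1) * (real n - 1) / (real n * (real n - 1))
      \<le> 2 * real (n div 2) * (real n - real (n div 2)) / (real n * (real n - 1))"
    using assms(1) by (intro divide_right_mono) (auto simp: algebra_simps)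
  then show ?thesis
    unfolding threshold_value_def divide_eq_over_n_pred_n[OF assms(1)] .
qed

lemma two_div_le_threshold_value_half:
  assumes "2 \<le> n"
  shows "2 / real n \<le> threshold_value n (n div 2)"
proof -
  note half = div_2_bounds[OF assms]
  have "0 \<le> (real (n div 2) - 1) * (real n - real (n div 2) - 1)"
    using half by (intro mult_nonneg_nonneg) auto
  then have "2 * (real n - 1) / (real n * (real n - 1))
      \<le> 2 * real (n div 2) * (real n - real (n div 2)) / (real n * (real n - 1))"
    using assms by (intro divide_right_mono) (auto simp: algebra_simps)
  then show ?thesis
    unfolding threshold_value_def divide_eq_over_n_pred_n[OF assms] .
qed

lemma optimal_value_Suc_le:
  assumes "2 \<le> n" "1 \<le> m" "m < n"
  shows "(real m - 1) * optimal_value n (Suc m) + 2 * max ((real m + 1) / real n) (optimal_value n (Suc m))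
    \<le> (real m + 1) * optimal_value n m"
proof (cases "n div 2 \<le> m")
  case True
  then show ?thesis
    using threshold_value_Suc[OF assms(1), of m] threshold_value_Suc_le[OF assms(1) True]
    unfolding optimal_value_def by (simp add: max_def)
next
  case False
  then show ?thesis
    using le_threshold_value_half[OF assms(1), of m]
    unfolding optimal_value_def by (simp add: max_def algebra_simps)
qed

lemma optimal_value_Suc_eq:
  assumes "2 \<le> n" "n div 2 \<le> m"
  shows "(real m - 1) * optimal_value n (Suc m) + 2 * (real m + 1) / real n = (real m + 1) * optimal_value n m"
  using threshold_value_Suc[OF assms(1), of m] assms(2) unfolding optimal_value_def by simp

lemma optimal_value_0_ge:
  assumes "2 \<le> n"
  shows "max (2 / real n) (optimal_value n 1) \<le> optimal_value n 0"
  using two_div_le_threshold_value_half[OF assms] div_2_bounds[OF assms]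
  unfolding optimal_value_def by auto

section \<open>Backward induction\<close>

lemma sum_atMost_ends:
  fixes g :: "nat \<Rightarrow> real"
  assumes "1 \<le> m" "\<And>x. 0 < x \<Longrightarrow> x < m \<Longrightarrow> g x = c"
  shows "(\<Sum>x\<le>m. g x) = g 0 + g m + (real m - 1) * c"
proof -
  have "{..m} = insert 0 (insert m {1..<m})"
    using assms(1) by auto
  then have "(\<Sum>x\<le>m. g x) = g 0 + g m + (\<Sum>x\<in>{1..<m}. g x)"
    using assms(1) by simp
  also have "(\<Sum>x\<in>{1..<m}. g x) = (real m - 1) * c"
    using assms by (simp add: of_nat_diff)
  finally show ?thesis .
qed

lemma card_code_success_le:
  assumes "2 \<le> n" "m \<le> n"
  shows "real (card {xs \<in> rank_codes n m. code_success m D xs}) \<le>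
    optimal_value n m * real (card (rank_codes n m))"
  using assms(2)
proof (induction "n - m" arbitrary: m D)
  case 0
  then have "{xs \<in> rank_codes n m. code_success m D xs} = {}"
    by (auto simp: rank_codes_self)
  with optimal_value_nonneg[OF assms(1) 0(2)] show ?case
    by (metis card.empty mult_nonneg_nonneg of_nat_0 of_nat_0_le_iff)
next
  case (Suc d)
  then have m: "m < n" by simp
  let ?N = "real (card (rank_codes n (Suc m)))"
  define V where "V = optimal_value n (Suc m)"
  define stop where "stop x = real (card {ys \<in> rank_codes n (Suc m). bow_win m x ys})" for x
  have IH: "real (card {ys \<in> rank_codes n (Suc m). code_success (Suc m) D' ys}) \<le> V * ?N" for D'
    unfolding V_def using Suc.hyps(1)[of "Suc m"] Suc.hyps(2) m by simp
  have N: "real (card (rank_codes n m)) = (real m + 1) * ?N"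
    using card_rank_codes_Suc[OF m] by (simp add: algebra_simps)
  have stop: "stop x = (of_bool (x = m) + of_bool (x = 0)) * ((real m + 1) / real n) * ?N" for x
    unfolding stop_def card_bow_win[OF assms(1) m] by simp
  have "real (card {xs \<in> rank_codes n m. code_success m D xs}) \<le> (\<Sum>x\<le>m. max (stop x) (V * ?N))"
    unfolding card_code_success_Cons[OF m] of_nat_sum stop_def
    using IH by (intro sum_mono) (auto simp: le_max_iff_disj)
  also have "\<dots> \<le> optimal_value n m * real (card (rank_codes n m))"
  proof (cases "m = 0")
    case True
    have "(\<Sum>x\<le>m. max (stop x) (V * ?N)) = max (2 / real n) V * ?N"
      using True by (simp add: stop max_mult_distrib_right)
    also have "\<dots> \<le> optimal_value n 0 * ?N"
      using optimal_value_0_ge[OF assms(1)] unfolding V_def True by (intro mult_right_mono) auto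
    finally show ?thesis using N True by simp
  next
    case False
    have "0 \<le> V" unfolding V_def using optimal_value_nonneg[OF assms(1)] m by simp
    have ends: "max (stop x) (V * ?N) = max ((real m + 1) / real n) V * ?N" if "x = 0 \<or> x = m" for x
      using that False by (auto simp: stop max_mult_distrib_right)
    have "(\<Sum>x\<le>m. max (stop x) (V * ?N)) =
        max (stop 0) (V * ?N) + max (stop m) (V * ?N) + (real m - 1) * (V * ?N)"
      using False \<open>0 \<le> V\<close> by (intro sum_atMost_ends) (auto simp: stop)
    also have "\<dots> = ((real m - 1) * V + 2 * max ((real m + 1) / real n) V) * ?N"
      using ends[of 0] ends[of m] by (simp add: algebra_simps)
    also have "\<dots> \<le> (real m + 1) * optimal_value n m * ?N"
      using optimal_value_Suc_le[OF assms(1) _ m] False unfolding V_def by (intro mult_right_mono) auto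
    finally show ?thesis using N by (simp add: algebra_simps)
  qed
  finally show ?case .
qed

text \<open>The threshold strategy as a decision rule on code prefixes p: the current candidate
  is number m + length p and is accepted iff it is past the threshold r and its relative
  rank (the last entry of p) is extreme.\<close>
definition threshold_rule :: "nat \<Rightarrow> nat \<Rightarrow> nat list \<Rightarrow> bool" where
  "threshold_rule r m p \<longleftrightarrow> r < m + length p \<and> (last p = m + length p - 1 \<or> last p = 0)"

lemma threshold_rule_Cons:
  "ys \<noteq> [] \<Longrightarrow> threshold_rule r m (x # ys) = threshold_rule r (Suc m) ys"
  unfolding threshold_rule_def by auto

lemma card_code_success_threshold:
  assumes "2 \<le> n" "m \<le> n"
  shows "real (card {xs \<in> rank_codes n m. code_success m (threshold_rule (n div 2) m) xs}) =
    optimal_value n m * real (card (rank_codes n m))"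
  using assms(2)
proof (induction "n - m" arbitrary: m)
  case 0
  then show ?case by (simp add: rank_codes_self optimal_value_def threshold_value_def)
next
  case (Suc d)
  then have m: "m < n" by simp
  let ?r = "n div 2"
  let ?N = "real (card (rank_codes n (Suc m)))"
  define V where "V = optimal_value n (Suc m)"
  have continue: "real (card {ys \<in> rank_codes n (Suc m).
      code_success (Suc m) (\<lambda>ys. threshold_rule ?r m (x # ys)) ys}) = V * ?N" for x
  proof -
    have "code_success (Suc m) (\<lambda>ys. threshold_rule ?r m (x # ys)) ys =
        code_success (Suc m) (threshold_rule ?r (Suc m)) ys" for ys
      by (rule code_success_cong, rule threshold_rule_Cons) auto
    then show ?thesis
      unfolding V_def using Suc.hyps(1)[of "Suc m"] Suc.hyps(2) m by simp
  qed
  have N: "real (card (rank_codes n m)) = (real m + 1) * ?N"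
    using card_rank_codes_Suc[OF m] by (simp add: algebra_simps)
  have accept: "threshold_rule ?r m [x] \<longleftrightarrow> ?r \<le> m \<and> (x = m \<or> x = 0)" for x
    unfolding threshold_rule_def by auto
  let ?t = "\<lambda>x. if threshold_rule ?r m [x] then real (card {ys \<in> rank_codes n (Suc m). bow_win m x ys})
    else V * ?N"
  have count: "real (card {xs \<in> rank_codes n m. code_success m (threshold_rule ?r m) xs}) = (\<Sum>x\<le>m. ?t x)"
    unfolding card_code_success_Cons[OF m] of_nat_sum by (intro sum.cong) (auto simp: continue)
  show ?case
  proof (cases "?r \<le> m")
    case True
    then have "1 \<le> m" using div_2_bounds[OF assms(1)] by linarith
    have ends: "?t x = (real m + 1) / real n * ?N" if "x = 0 \<or> x = m" for x
      using that True \<open>1 \<le> m\<close> accept card_bow_win[OF assms(1) m] by auto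
    have "(\<Sum>x\<le>m. ?t x) = ?t 0 + ?t m + (real m - 1) * (V * ?N)"
      using \<open>1 \<le> m\<close> accept by (intro sum_atMost_ends) auto
    also have "\<dots> = ((real m - 1) * V + 2 * (real m + 1) / real n) * ?N"
      using ends[of 0] ends[of m] by (simp add: algebra_simps)
    also have "\<dots> = optimal_value n m * real (card (rank_codes n m))"
      using optimal_value_Suc_eq[OF assms(1) True] N unfolding V_def by (simp add: algebra_simps)
    finally show ?thesis using count by simp
  next
    case False
    then have "optimal_value n m = V"
      unfolding V_def optimal_value_def by (simp add: max_def)
    then show ?thesis
      using count accept False N by (simp add: algebra_simps)
  qed
qed

section \<open>Arrival orders and rank codes\<close>

definition rel_rank :: "(nat \<Rightarrow> nat) \<Rightarrow> nat \<Rightarrow> nat" where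
  "rel_rank \<sigma> i = card {j. j < i \<and> \<sigma> j < \<sigma> i}"

definition rank_code :: "nat \<Rightarrow> (nat \<Rightarrow> nat) \<Rightarrow> nat list" where
  "rank_code n \<sigma> = map (rel_rank \<sigma>) [0..<n]"

lemma rel_rank_le: "rel_rank \<sigma> i \<le> i"
  unfolding rel_rank_def by (rule card_mono[of "{..<i}", simplified]) auto

lemma rank_code_in_rank_codes: "rank_code n \<sigma> \<in> rank_codes n 0"
  unfolding rank_codes_def rank_code_def by (simp add: rel_rank_le)

lemma length_rank_code [simp]: "length (rank_code n \<sigma>) = n"
  by (simp add: rank_code_def)

lemma nth_rank_code [simp]: "i < n \<Longrightarrow> rank_code n \<sigma> ! i = rel_rank \<sigma> i"
  by (simp add: rank_code_def)

lemma take_rank_code: "k \<le> n \<Longrightarrow> take k (rank_code n \<sigma>) = rank_code k \<sigma>"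
  by (simp add: rank_code_def take_map)

lemma less_iff_rel_rank_less:
  assumes "inj_on \<sigma> {..k}" "i < k"
  shows "\<sigma> i < \<sigma> k \<longleftrightarrow> card {j. j < k \<and> \<sigma> j < \<sigma> i} < rel_rank \<sigma> k"
proof
  assume "\<sigma> i < \<sigma> k"
  with assms(2) have "{j. j < k \<and> \<sigma> j < \<sigma> i} \<subset> {j. j < k \<and> \<sigma> j < \<sigma> k}"
    by auto
  then show "card {j. j < k \<and> \<sigma> j < \<sigma> i} < rel_rank \<sigma> k"
    unfolding rel_rank_def by (rule psubset_card_mono[rotated]) simp
next
  assume less: "card {j. j < k \<and> \<sigma> j < \<sigma> i} < rel_rank \<sigma> k"
  show "\<sigma> i < \<sigma> k"
  proof (rule ccontr)
    assume "\<not> \<sigma> i < \<sigma> k"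
    moreover have "\<sigma> i \<noteq> \<sigma> k" using assms by (auto dest: inj_onD)
    ultimately have "{j. j < k \<and> \<sigma> j < \<sigma> k} \<subseteq> {j. j < k \<and> \<sigma> j < \<sigma> i}"
      by auto
    then have "rel_rank \<sigma> k \<le> card {j. j < k \<and> \<sigma> j < \<sigma> i}"
      unfolding rel_rank_def by (rule card_mono[rotated]) simp
    with less show False by simp
  qed
qed

lemma rel_rank_eq_imp_same_order:
  assumes "inj_on \<sigma> {..<k}" "inj_on \<tau> {..<k}" "\<And>i. i < k \<Longrightarrow> rel_rank \<sigma> i = rel_rank \<tau> i"
    "i < k" "j < k"
  shows "\<sigma> i < \<sigma> j \<longleftrightarrow> \<tau> i < \<tau> j"
  using assms
proof (induction k arbitrary: i j)
  case (Suc k)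
  have "inj_on \<sigma> {..<k}" "inj_on \<tau> {..<k}"
    using Suc.prems(1,2) by (auto intro: inj_on_subset[of _ "{..<Suc k}"])
  then have IH: "\<sigma> i < \<sigma> j \<longleftrightarrow> \<tau> i < \<tau> j" if "i < k" "j < k" for i j
    using Suc.IH[of i j] Suc.prems(3) that by simp
  have inj: "inj_on \<sigma> {..k}" "inj_on \<tau> {..k}"
    using Suc.prems(1,2) lessThan_Suc_atMost by auto
  have below: "\<sigma> i < \<sigma> k \<longleftrightarrow> \<tau> i < \<tau> k" if "i < k" for i
  proof -
    have "{j. j < k \<and> \<sigma> j < \<sigma> i} = {j. j < k \<and> \<tau> j < \<tau> i}"
      using IH that by auto
    then show ?thesis
      using less_iff_rel_rank_less[OF inj(1) that] less_iff_rel_rank_less[OF inj(2) that] Suc.prems(3)[of k]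
      by simp
  qed
  have above: "\<sigma> k < \<sigma> i \<longleftrightarrow> \<tau> k < \<tau> i" if "i < k" for i
    using below[OF that] inj that by (auto dest: inj_onD[of _ _ i k] simp: linorder_neq_iff)
  from Suc.prems(4,5) consider "i < k" "j < k" | "i < k" "j = k" | "i = k" "j < k" | "i = k" "j = k"
    by linarith
  then show ?case
    by cases (use IH below above in auto)
qed simp

lemma rel_obs_eq_if_rank_code_eq:
  assumes "inj_on \<sigma> {..<k}" "inj_on \<tau> {..<k}" "rank_code k \<sigma> = rank_code k \<tau>"
  shows "rel_obs \<sigma> k = rel_obs \<tau> k"
proof -
  have "rel_rank \<sigma> i = rel_rank \<tau> i" if "i < k" for i
    using arg_cong[OF assms(3), of "\<lambda>xs. xs ! i"] that by simp
  then show ?thesis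
    unfolding rel_obs_def using rel_rank_eq_imp_same_order[OF assms(1,2)] by (intro ext) auto
qed

lemma card_less_permutes:
  assumes "\<sigma> permutes {..<n}" "i < n"
  shows "card {j. j < n \<and> \<sigma> j < \<sigma> i} = \<sigma> i"
proof -
  have "\<sigma> ` {j. j < n \<and> \<sigma> j < \<sigma> i} = {..<\<sigma> i}"
  proof -
    have "\<sigma> ` {j. j < n \<and> \<sigma> j < \<sigma> i} = {v \<in> \<sigma> ` {..<n}. v < \<sigma> i}"
      by auto
    also have "\<dots> = {..<\<sigma> i}"
      using permutes_image[OF assms(1)] permutes_in_image[OF assms(1), of i] assms(2) by auto
    finally show ?thesis .
  qed
  moreover have "inj_on \<sigma> {j. j < n \<and> \<sigma> j < \<sigma> i}"
    using permutes_inj[OF assms(1)] by (auto intro: inj_on_subset)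
  ultimately show ?thesis
    by (metis card_image card_lessThan)
qed

lemma inj_on_rank_code: "inj_on (rank_code n) {\<sigma>. \<sigma> permutes {..<n}}"
proof (rule inj_onI)
  fix \<sigma> \<tau> assume "\<sigma> \<in> {\<sigma>. \<sigma> permutes {..<n}}" "\<tau> \<in> {\<sigma>. \<sigma> permutes {..<n}}"
    and code: "rank_code n \<sigma> = rank_code n \<tau>"
  then have perm: "\<sigma> permutes {..<n}" "\<tau> permutes {..<n}" by auto
  have inj: "inj_on \<sigma> {..<n}" "inj_on \<tau> {..<n}"
    using permutes_inj[OF perm(1)] permutes_inj[OF perm(2)] by (auto intro: inj_on_subset)
  have "rel_rank \<sigma> i = rel_rank \<tau> i" if "i < n" for i
    using arg_cong[OF code, of "\<lambda>xs. xs ! i"] that by simp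
  note same_order = rel_rank_eq_imp_same_order[OF inj this]
  show "\<sigma> = \<tau>"
  proof
    fix i show "\<sigma> i = \<tau> i"
    proof (cases "i < n")
      case True
      then have "{j. j < n \<and> \<sigma> j < \<sigma> i} = {j. j < n \<and> \<tau> j < \<tau> i}"
        using same_order by auto
      then show ?thesis
        using card_less_permutes[OF perm(1) True] card_less_permutes[OF perm(2) True] by simp
    next
      case False
      then show ?thesis
        using permutes_not_in[OF perm(1)] permutes_not_in[OF perm(2)] by simp
    qed
  qed
qed

lemma bij_betw_rank_code: "bij_betw (rank_code n) {\<sigma>. \<sigma> permutes {..<n}} (rank_codes n 0)"
proof -
  have "rank_code n ` {\<sigma>. \<sigma> permutes {..<n}} = rank_codes n 0"
  proof (rule card_subset_eq[OF finite_rank_codes])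
    show "rank_code n ` {\<sigma>. \<sigma> permutes {..<n}} \<subseteq> rank_codes n 0"
      using rank_code_in_rank_codes by auto
    have "card (rank_code n ` {\<sigma>. \<sigma> permutes {..<n}}) = fact n"
      using card_image[OF inj_on_rank_code] card_permutations[of "{..<n}" n] by simp
    also have "\<dots> = card (rank_codes n 0)"
      by (simp add: card_rank_codes fact_prod_Suc atLeast0LessThan)
    finally show "card (rank_code n ` {\<sigma>. \<sigma> permutes {..<n}}) = card (rank_codes n 0)" .
  qed
  then show ?thesis
    using inj_on_rank_code by (simp add: bij_betw_def)
qed

lemma rel_rank_eq_self_iff: "rel_rank \<sigma> i = i \<longleftrightarrow> (\<forall>l<i. \<sigma> l < \<sigma> i)"
proof
  assume "rel_rank \<sigma> i = i"
  then have "{j. j < i \<and> \<sigma> j < \<sigma> i} = {..<i}"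
    unfolding rel_rank_def by (intro card_subset_eq) auto
  then show "\<forall>l<i. \<sigma> l < \<sigma> i" by auto
next
  assume "\<forall>l<i. \<sigma> l < \<sigma> i"
  then have "{j. j < i \<and> \<sigma> j < \<sigma> i} = {..<i}" by auto
  then show "rel_rank \<sigma> i = i" unfolding rel_rank_def by simp
qed

lemma rel_rank_eq_0_iff:
  assumes "inj_on \<sigma> {..i}"
  shows "rel_rank \<sigma> i = 0 \<longleftrightarrow> (\<forall>l<i. \<sigma> i < \<sigma> l)"
proof -
  have ne: "\<sigma> l \<noteq> \<sigma> i" if "l < i" for l
    using assms that by (auto dest: inj_onD)
  have "rel_rank \<sigma> i = 0 \<longleftrightarrow> (\<forall>l<i. \<not> \<sigma> l < \<sigma> i)"
    unfolding rel_rank_def by auto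
  also have "\<dots> \<longleftrightarrow> (\<forall>l<i. \<sigma> i < \<sigma> l)"
    using ne by (metis linorder_neqE_nat order_less_imp_not_less)
  finally show ?thesis .
qed

lemma max_iff_last_record:
  fixes f :: "nat \<Rightarrow> 'a::linorder"
  assumes "inj_on f {..<n}" "i < n"
  shows "(\<forall>l<n. l \<noteq> i \<longrightarrow> f l < f i) \<longleftrightarrow>
    (\<forall>l<i. f l < f i) \<and> (\<forall>q. i < q \<and> q < n \<longrightarrow> \<not> (\<forall>l<q. f l < f q))"
proof
  assume "\<forall>l<n. l \<noteq> i \<longrightarrow> f l < f i"
  then show "(\<forall>l<i. f l < f i) \<and> (\<forall>q. i < q \<and> q < n \<longrightarrow> \<not> (\<forall>l<q. f l < f q))"
    using assms(2) by (auto dest: order.asym)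
next
  assume records: "(\<forall>l<i. f l < f i) \<and> (\<forall>q. i < q \<and> q < n \<longrightarrow> \<not> (\<forall>l<q. f l < f q))"
  obtain q where q: "q < n" "f q = Max (f ` {..<n})"
    using Max_in[of "f ` {..<n}"] assms(2) by fastforce
  have q_max: "f l < f q" if "l < n" "l \<noteq> q" for l
  proof -
    have "f l \<le> f q" using q(2) that(1) by simp
    moreover have "f l \<noteq> f q" using inj_onD[OF assms(1), of l q] q(1) that by auto
    ultimately show ?thesis by simp
  qed
  have "q = i"
  proof (rule ccontr)
    assume "q \<noteq> i"
    then consider "q < i" | "i < q" by linarith
    then show False
    proof cases
      case 1
      then show False using records q_max[of i] assms(2) by auto
    next
      case 2
      then show False using records q_max q(1) by auto
    qed
  qed
  then show "\<forall>l<n. l \<noteq> i \<longrightarrow> f l < f i"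
    using q_max by blast
qed

lemma permutes_eq_top_iff:
  fixes \<sigma> :: "nat \<Rightarrow> nat"
  assumes "\<sigma> permutes {..<n}" "i < n"
  shows "\<sigma> i = n - 1 \<longleftrightarrow> (\<forall>l<n. l \<noteq> i \<longrightarrow> \<sigma> l < \<sigma> i)"
proof
  assume top: "\<sigma> i = n - 1"
  show "\<forall>l<n. l \<noteq> i \<longrightarrow> \<sigma> l < \<sigma> i"
  proof (intro allI impI)
    fix l assume "l < n" "l \<noteq> i"
    then have "\<sigma> l < n" "\<sigma> l \<noteq> \<sigma> i"
      using permutes_in_image[OF assms(1)] permutes_inj[OF assms(1)] assms(2) by (auto dest: injD)
    with top show "\<sigma> l < \<sigma> i" by auto
  qed
next
  assume "\<forall>l<n. l \<noteq> i \<longrightarrow> \<sigma> l < \<sigma> i"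
  then have "{j. j < n \<and> \<sigma> j < \<sigma> i} = {..<n} - {i}" by auto
  then show "\<sigma> i = n - 1"
    using card_less_permutes[OF assms] assms(2) by simp
qed

lemma permutes_eq_0_iff:
  fixes \<sigma> :: "nat \<Rightarrow> nat"
  assumes "\<sigma> permutes {..<n}" "i < n"
  shows "\<sigma> i = 0 \<longleftrightarrow> (\<forall>l<n. l \<noteq> i \<longrightarrow> \<sigma> i < \<sigma> l)"
proof -
  have ne: "\<sigma> l \<noteq> \<sigma> i" if "l \<noteq> i" for l
    using permutes_inj[OF assms(1)] that by (auto dest: injD)
  have "\<sigma> i = 0 \<longleftrightarrow> {j. j < n \<and> \<sigma> j < \<sigma> i} = {}"
    using card_less_permutes[OF assms] by (metis card_eq_0_iff finite_Collect_conjI finite_Collect_less_nat)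
  also have "\<dots> \<longleftrightarrow> (\<forall>l<n. \<not> \<sigma> l < \<sigma> i)"
    by auto
  also have "\<dots> \<longleftrightarrow> (\<forall>l<n. l \<noteq> i \<longrightarrow> \<sigma> i < \<sigma> l)"
    using ne by (metis linorder_neqE_nat order_less_imp_not_less)
  finally show ?thesis .
qed

lemma bow_win_rank_code:
  fixes \<sigma> :: "nat \<Rightarrow> nat"
  assumes "\<sigma> permutes {..<n}" "i < n"
  shows "bow_win i (rel_rank \<sigma> i) (drop (Suc i) (rank_code n \<sigma>)) \<longleftrightarrow> \<sigma> i = 0 \<or> \<sigma> i = n - 1"
proof -
  have inj: "inj_on \<sigma> {..<n}" "\<And>q. q < n \<Longrightarrow> inj_on \<sigma> {..q}"
    using permutes_inj[OF assms(1)] by (auto intro: inj_on_subset)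
  let ?ys = "drop (Suc i) (rank_code n \<sigma>)"
  have nth: "?ys ! j = rel_rank \<sigma> (Suc i + j)" if "j < n - Suc i" for j
    using that by simp
  have later: "(\<forall>j<length ?ys. P (Suc i + j) (?ys ! j)) \<longleftrightarrow> (\<forall>q. i < q \<and> q < n \<longrightarrow> P q (rel_rank \<sigma> q))"
    for P
  proof (intro iffI allI impI)
    fix q assume all: "\<forall>j<length ?ys. P (Suc i + j) (?ys ! j)" and q: "i < q \<and> q < n"
    then have "q - Suc i < length ?ys" "Suc i + (q - Suc i) = q" by auto
    with all nth[of "q - Suc i"] show "P q (rel_rank \<sigma> q)" by fastforce
  next
    fix j assume "\<forall>q. i < q \<and> q < n \<longrightarrow> P q (rel_rank \<sigma> q)" "j < length ?ys"
    then show "P (Suc i + j) (?ys ! j)" using nth[of j] by simp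
  qed
  have best: "rel_rank \<sigma> i = i \<and> (\<forall>j<length ?ys. ?ys ! j \<noteq> Suc i + j) \<longleftrightarrow> \<sigma> i = n - 1"
    unfolding later[of "\<lambda>q v. v \<noteq> q"] rel_rank_eq_self_iff permutes_eq_top_iff[OF assms]
      max_iff_last_record[OF inj(1) assms(2)] ..
  have "inj_on (\<lambda>j. - int (\<sigma> j)) {..<n}"
    using inj(1) by (auto simp: inj_on_def)
  from max_iff_last_record[OF this assms(2)]
  have "(\<forall>l<n. l \<noteq> i \<longrightarrow> \<sigma> i < \<sigma> l) \<longleftrightarrow>
      (\<forall>l<i. \<sigma> i < \<sigma> l) \<and> (\<forall>q. i < q \<and> q < n \<longrightarrow> \<not> (\<forall>l<q. \<sigma> q < \<sigma> l))"
    by simp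
  moreover have "(\<forall>q. i < q \<and> q < n \<longrightarrow> rel_rank \<sigma> q \<noteq> 0) \<longleftrightarrow>
      (\<forall>q. i < q \<and> q < n \<longrightarrow> \<not> (\<forall>l<q. \<sigma> q < \<sigma> l))"
    using rel_rank_eq_0_iff[OF inj(2)] by blast
  ultimately have worst: "rel_rank \<sigma> i = 0 \<and> (\<forall>j<length ?ys. ?ys ! j \<noteq> 0) \<longleftrightarrow> \<sigma> i = 0"
    unfolding later[of "\<lambda>q v. v \<noteq> 0"] permutes_eq_0_iff[OF assms] rel_rank_eq_0_iff[OF inj(2)[OF assms(2)]]
    by blast
  show ?thesis
    unfolding bow_win_def using best worst by blast
qed

text \<open>A strategy as a decision rule on code prefixes: it is applied to the observation
  of any arrival order with code prefix p (all such orders give the same observation).\<close>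
definition code_rule :: "nat \<Rightarrow> strategy \<Rightarrow> nat list \<Rightarrow> bool" where
  "code_rule n S p =
     S (length p) (rel_obs (SOME \<tau>. \<tau> permutes {..<n} \<and> rank_code (length p) \<tau> = p) (length p))"

lemma code_rule_take_rank_code:
  assumes "\<sigma> permutes {..<n}" "k \<le> n"
  shows "code_rule n S (take k (rank_code n \<sigma>)) = S k (rel_obs \<sigma> k)"
proof -
  define \<tau> where "\<tau> = (SOME \<tau>. \<tau> permutes {..<n} \<and> rank_code k \<tau> = rank_code k \<sigma>)"
  have "\<tau> permutes {..<n} \<and> rank_code k \<tau> = rank_code k \<sigma>"
    unfolding \<tau>_def by (rule someI[of _ \<sigma>]) (use assms(1) in simp)
  moreover have "inj_on \<rho> {..<k}" if "\<rho> permutes {..<n}" for \<rho>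
    using permutes_inj[OF that] by (auto intro: inj_on_subset)
  ultimately have "rel_obs \<tau> k = rel_obs \<sigma> k"
    using rel_obs_eq_if_rank_code_eq assms(1) by blast
  then show ?thesis
    unfolding code_rule_def take_rank_code[OF assms(2)] \<tau>_def by simp
qed

lemma bow_success_iff_code_success:
  fixes \<sigma> :: "nat \<Rightarrow> nat"
  assumes "\<sigma> permutes {..<n}"
  shows "bow_success n S \<sigma> \<longleftrightarrow> code_success 0 (code_rule n S) (rank_code n \<sigma>)"
proof -
  have "code_rule n S (take k (rank_code n \<sigma>)) = S k (rel_obs \<sigma> k)" if "k \<le> n" for k
    using code_rule_take_rank_code[OF assms that] .
  moreover have "bow_win (k - 1) (rank_code n \<sigma> ! (k - 1)) (drop k (rank_code n \<sigma>)) \<longleftrightarrow>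
      \<sigma> (k - 1) = 0 \<or> \<sigma> (k - 1) = n - 1" if "k \<in> {1..n}" for k
  proof -
    from that have "k - 1 < n" "Suc (k - 1) = k" by auto
    then show ?thesis using bow_win_rank_code[OF assms, of "k - 1"] by simp
  qed
  ultimately show ?thesis
    unfolding code_success_iff bow_success_def length_rank_code by (intro bex_cong) auto
qed

lemma success_prob_eq_rank_codes:
  "success_prob n S =
    real (card {xs \<in> rank_codes n 0. code_success 0 (code_rule n S) xs}) / real (card (rank_codes n 0))"
proof -
  have card_eq: "card {\<sigma>. \<sigma> permutes {..<n} \<and> Q (rank_code n \<sigma>)} = card {xs \<in> rank_codes n 0. Q xs}"
    for Q
  proof -
    have "{xs \<in> rank_codes n 0. Q xs} = rank_code n ` {\<sigma>. \<sigma> permutes {..<n} \<and> Q (rank_code n \<sigma>)}"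
      unfolding bij_betw_imp_surj_on[OF bij_betw_rank_code, of n, symmetric] by auto
    moreover have "inj_on (rank_code n) {\<sigma>. \<sigma> permutes {..<n} \<and> Q (rank_code n \<sigma>)}"
      by (rule inj_on_subset[OF inj_on_rank_code]) auto
    ultimately show ?thesis
      by (simp add: card_image)
  qed
  have "{\<sigma>. \<sigma> permutes {..<n} \<and> bow_success n S \<sigma>} =
      {\<sigma>. \<sigma> permutes {..<n} \<and> code_success 0 (code_rule n S) (rank_code n \<sigma>)}"
    using bow_success_iff_code_success by blast
  then show ?thesis
    unfolding success_prob_def
    using card_eq[of "code_success 0 (code_rule n S)"] card_eq[of "\<lambda>_. True"] by simp
qed

lemma code_success_threshold_strategy:
  assumes "xs \<in> rank_codes n 0"
  shows "code_success 0 (code_rule n (threshold_strategy r)) xs \<longleftrightarrow> code_success 0 (threshold_rule r 0) xs"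
proof -
  obtain \<sigma> where \<sigma>: "\<sigma> permutes {..<n}" and xs: "xs = rank_code n \<sigma>"
    using assms bij_betw_imp_surj_on[OF bij_betw_rank_code] by blast
  have inj: "inj_on \<sigma> {..k}" for k
    using permutes_inj[OF \<sigma>] by (auto intro: inj_on_subset)
  show ?thesis
  proof (rule code_success_cong)
    fix k assume k: "1 \<le> k" "k \<le> length xs"
    have "length xs = n" using xs by simp
    with k have "take k xs \<noteq> []" "k - 1 < n" by auto
    then have last: "last (take k xs) = rel_rank \<sigma> (k - 1)"
      using xs k by (simp add: last_conv_nth)
    have "code_rule n (threshold_strategy r) (take k xs) = threshold_strategy r k (rel_obs \<sigma> k)"
      using code_rule_take_rank_code[OF \<sigma>] k xs by simp
    also have "\<dots> \<longleftrightarrow> r < k \<and> ((\<forall>l<k - 1. \<sigma> l < \<sigma> (k - 1)) \<or> (\<forall>l<k - 1. \<sigma> (k - 1) < \<sigma> l))"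
      unfolding threshold_strategy_def rel_obs_def using k by auto
    also have "\<dots> \<longleftrightarrow> threshold_rule r 0 (take k xs)"
      unfolding threshold_rule_def last
      using k xs by (simp add: rel_rank_eq_self_iff rel_rank_eq_0_iff[OF inj])
    finally show "code_rule n (threshold_strategy r) (take k xs) = threshold_rule r 0 (take k xs)" .
  qed
qed

lemma success_prob_le_1: "success_prob n S \<le> 1"
proof -
  have "card {\<sigma>. \<sigma> permutes {..<n} \<and> bow_success n S \<sigma>} \<le> card {\<sigma>. \<sigma> permutes {..<n}}"
    by (intro card_mono) (auto simp: finite_permutations)
  then show ?thesis
    unfolding success_prob_def by (auto simp: divide_le_eq_1)
qed

lemma success_prob_threshold_one: "success_prob 1 (threshold_strategy 0) = 1"
proof -
  have "bow_success 1 (threshold_strategy 0) \<sigma>" if "\<sigma> permutes {..<1}" for \<sigma>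
  proof -
    have "\<sigma> 0 = 0" using permutes_in_image[OF that, of 0] by simp
    then show ?thesis
      unfolding bow_success_def threshold_strategy_def by (intro bexI[of _ 1]) auto
  qed
  then have "{\<sigma>. \<sigma> permutes {..<1} \<and> bow_success 1 (threshold_strategy 0) \<sigma>} = {\<sigma>. \<sigma> permutes {..<1}}"
    by blast
  moreover have "card {\<sigma>. \<sigma> permutes {..<1::nat}} \<noteq> 0"
    using card_permutations[of "{..<1::nat}" 1] by simp
  ultimately show ?thesis
    unfolding success_prob_def by simp
qed

lemma success_prob_le_optimal_value:
  assumes "2 \<le> n"
  shows "success_prob n S \<le> optimal_value n 0"
  using card_code_success_le[OF assms, of 0 "code_rule n S"] card_rank_codes_pos[of 0 n]
  unfolding success_prob_eq_rank_codes by (simp add: divide_le_eq)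

lemma success_prob_threshold_half:
  assumes "2 \<le> n"
  shows "success_prob n (threshold_strategy (n div 2)) = optimal_value n 0"
proof -
  have "{xs \<in> rank_codes n 0. code_success 0 (code_rule n (threshold_strategy (n div 2))) xs} =
      {xs \<in> rank_codes n 0. code_success 0 (threshold_rule (n div 2) 0) xs}"
    using code_success_threshold_strategy by blast
  then show ?thesis
    using card_code_success_threshold[OF assms, of 0] card_rank_codes_pos[of 0 n]
    unfolding success_prob_eq_rank_codes by simp
qed

theorem theorem1:
  fixes n :: nat
  assumes "n \<ge> 1"
  shows "\<exists>r. r \<le> n \<and> (\<forall>S. success_prob n S \<le> success_prob n (threshold_strategy r))"
proof (cases "n = 1")
  case True
  then show ?thesis
    using success_prob_le_1 success_prob_threshold_one by auto
next
  case False
  with assms have "2 \<le> n" by simp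
  then show ?thesis
    using success_prob_le_optimal_value success_prob_threshold_half by (intro exI[of _ "n div 2"]) auto
qed

end
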